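(* The orthomodular lattice MG1 does not admit a strong set of states. More precisely, every state $m$ on MG1 with $m(v)=1$ satisfies $m(u')=1$, although $v\not\le u'$.
   Context: MG1 is the orthomodular lattice given by the following Greechie diagram: that is, the unique (up to isomorphism) orthomodular lattice whose atoms are the listed atoms and whose blocks (maximal Boolean subalgebras) correspond to the listed blocks. In each block, the listed atoms are mutually orthogonal and their join is $1$. The diagram has no loops of order $3$ or $4$. The 19 atoms are $v,e_1,e_2,e_3,a_1,a_2,a_3,b_1,b_2,b_3,c_1,c_2,c_3,d_1,d_2,d_3,f_1,f_2,u$. The 11 blocks (each with three atoms) are: $\{v,e_1,a_1\}$, $\{v,e_2,a_2\}$, $\{v,e_3,a_3\}$, $\{a_1,b_1,c_1\}$, $\{a_2,b_2,c_2\}$, $\{a_3,b_3,c_3\}$, $\{b_1,b_2,b_3\}$, $\{c_1,f_1,d_1\}$, $\{c_2,f_2,d_2\}$, $\{c_3,u,d_3\}$, $\{d_1,d_2,d_3\}$. A state on an ortholattice $L$ is a map $m:L\to[0,1]$ with $m(1)=1$ and $a\le b'\Rightarrow m(a\cup b)=m(a)+m(b)$. $L$ admits a strong set of states if there is a nonempty set $S$ of states such that for all $a,b\in L$ with $a\not\le b$ some $m\in S$ has $m(a)=1$ and $m(b)\ne1$. *)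

theory Defs
  imports Complex_Main
begin

text \<open>Concrete realisation of the orthomodular lattice MG1 given by its Greechie
diagram.  Since every block has three atoms and the diagram has no loops of
order 3 or 4, the elements of MG1 are exactly 0, 1, the 19 atoms and their
19 orthocomplements (each block is the 8-element Boolean algebra
{0, a, b, c, a', b', c', 1}).\<close>

datatype atom = V | E1 | E2 | E3 | A1 | A2 | A3 | B1 | B2 | B3
  | C1 | C2 | C3 | D1 | D2 | D3 | F1 | F2 | U

definition blocks :: "atom set list" where
  "blocks = [{V,E1,A1}, {V,E2,A2}, {V,E3,A3}, {A1,B1,C1}, {A2,B2,C2}, {A3,B3,C3},
             {B1,B2,B3}, {C1,F1,D1}, {C2,F2,D2}, {C3,U,D3}, {D1,D2,D3}]"

definition orth :: "atom \<Rightarrow> atom \<Rightarrow> bool" where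
  "orth a b \<longleftrightarrow> a \<noteq> b \<and> (\<exists>B\<in>set blocks. a \<in> B \<and> b \<in> B)"

datatype mg1 = Zero | One | At atom | Co atom

fun mg1_le :: "mg1 \<Rightarrow> mg1 \<Rightarrow> bool" where
  "mg1_le Zero _ = True"
| "mg1_le _ One = True"
| "mg1_le (At a) (At b) = (a = b)"
| "mg1_le (At a) (Co b) = orth a b"
| "mg1_le (Co a) (Co b) = (a = b)"
| "mg1_le _ _ = False"

fun mg1_compl :: "mg1 \<Rightarrow> mg1" where
  "mg1_compl Zero = One"
| "mg1_compl One = Zero"
| "mg1_compl (At a) = Co a"
| "mg1_compl (Co a) = At a"

definition mg1_join :: "mg1 \<Rightarrow> mg1 \<Rightarrow> mg1" where
  "mg1_join x y = (THE z. mg1_le x z \<and> mg1_le y z \<and>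
                     (\<forall>w. mg1_le x w \<and> mg1_le y w \<longrightarrow> mg1_le z w))"

definition mg1_state :: "(mg1 \<Rightarrow> real) \<Rightarrow> bool" where
  "mg1_state m \<longleftrightarrow> (\<forall>x. 0 \<le> m x \<and> m x \<le> 1) \<and> m One = 1 \<and>
     (\<forall>a b. mg1_le a (mg1_compl b) \<longrightarrow> m (mg1_join a b) = m a + m b)"

definition mg1_strong_set_of_states :: "(mg1 \<Rightarrow> real) set \<Rightarrow> bool" where
  "mg1_strong_set_of_states S \<longleftrightarrow> S \<noteq> {} \<and> (\<forall>m\<in>S. mg1_state m) \<and>
     (\<forall>a b. \<not> mg1_le a b \<longrightarrow> (\<exists>m\<in>S. m a = 1 \<and> m b \<noteq> 1))"

definition mg1_admits_strong_set_of_states :: bool where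
  "mg1_admits_strong_set_of_states \<longleftrightarrow> (\<exists>S. mg1_strong_set_of_states S)"

end

theory Submission
  imports Defs
begin

(* In an orthomodular lattice built from a Greechie diagram, every
   state m sums to 1 on the three atoms of each block: if a, b, c form a block,
   then a \<or> b = c' and c \<or> c' = 1.  For MG1 this gives eleven linear equations
   in the values of m on the atoms.  If m(v) = 1, the three blocks through v
   force m(e_i) = m(a_i) = 0, hence m(b_i) + m(c_i) = 1; with the block
   {b_1,b_2,b_3} this gives m(c_1) + m(c_2) + m(c_3) = 2.  Adding the blocks
   through c_1, c_2, c_3 and using the block {d_1,d_2,d_3} leaves
   m(f_1) + m(f_2) + m(u) = 0, so m(u) = 0 and m(u') = 1.  Since v and u share no
   block, v \<le> u' fails, so no state separates v from u' and MG1 admits no strong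
   set of states. *)

lemma orth_irrefl: "\<not> orth a a"
  by (simp add: orth_def)

lemma mg1_le_antisym: "mg1_le x y \<Longrightarrow> mg1_le y x \<Longrightarrow> x = y"
  by (cases x; cases y) (auto simp: orth_irrefl)

lemma mg1_join_eqI:
  assumes "mg1_le x z" and "mg1_le y z"
    and "\<And>w. mg1_le x w \<Longrightarrow> mg1_le y w \<Longrightarrow> mg1_le z w"
  shows "mg1_join x y = z"
  unfolding mg1_join_def
  by (rule the_equality) (use assms mg1_le_antisym in blast)+

lemma mg1_join_At_Co: "mg1_join (At a) (Co a) = One"
proof (rule mg1_join_eqI)
  fix w assume "mg1_le (At a) w" and "mg1_le (Co a) w"
  then show "mg1_le One w" by (cases w) (auto simp: orth_irrefl)
qed auto

text \<open>Two atoms of a block join to the complement of the third atom, provided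
  that third atom is the only atom orthogonal to both (no loops of order 2).\<close>
lemma mg1_join_block_atoms:
  assumes "orth a b" and "orth a c" and "orth b c"
    and third_unique: "\<And>d. orth a d \<Longrightarrow> orth b d \<Longrightarrow> d = c"
  shows "mg1_join (At a) (At b) = Co c"
proof (rule mg1_join_eqI)
  fix w assume "mg1_le (At a) w" and "mg1_le (At b) w"
  then show "mg1_le (Co c) w"
    using third_unique \<open>orth a b\<close> by (cases w) (auto simp: orth_irrefl)
qed (use assms(1-3) in auto)

lemma state_nonneg: "mg1_state m \<Longrightarrow> 0 \<le> m x"
  by (simp add: mg1_state_def)

lemma state_additive:
  "mg1_state m \<Longrightarrow> mg1_le x (mg1_compl y) \<Longrightarrow> m (mg1_join x y) = m x + m y"
  by (simp add: mg1_state_def)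

lemma state_compl_sum:
  assumes "mg1_state m"
  shows "m (At a) + m (Co a) = 1"
proof -
  have "m (mg1_join (At a) (Co a)) = m (At a) + m (Co a)"
    using state_additive[OF assms, of "At a" "Co a"] by simp
  moreover have "m One = 1" using assms by (simp add: mg1_state_def)
  ultimately show ?thesis by (simp add: mg1_join_At_Co)
qed

lemma state_block_sum:
  assumes m: "mg1_state m" and ab: "orth a b" and ac: "orth a c" and bc: "orth b c"
    and third_unique: "\<forall>d. orth a d \<and> orth b d \<longrightarrow> d = c"
  shows "m (At a) + m (At b) + m (At c) = 1"
proof -
  have join: "mg1_join (At a) (At b) = Co c"
    using ab ac bc third_unique by (intro mg1_join_block_atoms) blast+
  have "m (Co c) = m (At a) + m (At b)"
    using state_additive[OF m, of "At a" "At b"] ab unfolding join by simp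
  then show ?thesis using state_compl_sum[OF m, of c] by linarith
qed

lemma mg1_state_block_equations:
  assumes m: "mg1_state m"
  shows "m (At V) + m (At E1) + m (At A1) = 1"
    and "m (At V) + m (At E2) + m (At A2) = 1"
    and "m (At V) + m (At E3) + m (At A3) = 1"
    and "m (At A1) + m (At B1) + m (At C1) = 1"
    and "m (At A2) + m (At B2) + m (At C2) = 1"
    and "m (At A3) + m (At B3) + m (At C3) = 1"
    and "m (At B1) + m (At B2) + m (At B3) = 1"
    and "m (At C1) + m (At F1) + m (At D1) = 1"
    and "m (At C2) + m (At F2) + m (At D2) = 1"
    and "m (At C3) + m (At U) + m (At D3) = 1"
    and "m (At D1) + m (At D2) + m (At D3) = 1"
  by (rule state_block_sum[OF m]; auto simp: orth_def blocks_def)+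

lemma state_at_V_vanishes_at_U:
  assumes m: "mg1_state m" and v: "m (At V) = 1"
  shows "m (At U) = 0"
proof -
  note eq = mg1_state_block_equations[OF m]
  note nonneg = state_nonneg[OF m]
  have a_zero: "m (At A1) = 0" "m (At A2) = 0" "m (At A3) = 0"
    using eq(1-3) v nonneg[of "At E1"] nonneg[of "At E2"] nonneg[of "At E3"]
      nonneg[of "At A1"] nonneg[of "At A2"] nonneg[of "At A3"] by linarith+
  have c_sum: "m (At C1) + m (At C2) + m (At C3) = 2"
    using eq(4-7) a_zero by linarith
  have "m (At F1) + m (At F2) + m (At U) = 0"
    using eq(8-11) c_sum by linarith
  then show ?thesis using nonneg[of "At F1"] nonneg[of "At F2"] nonneg[of "At U"] by linarith
qed

lemma state_at_V_full_at_co_U: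
  assumes "mg1_state m" and "m (At V) = 1"
  shows "m (Co U) = 1"
  using state_at_V_vanishes_at_U[OF assms] state_compl_sum[OF assms(1), of U] by simp

text \<open>v and u lie in no common block, so v is not below u'.\<close>
lemma V_not_le_co_U: "\<not> mg1_le (At V) (Co U)"
  by (simp add: orth_def blocks_def)

theorem theorem6p6:
  shows "\<not> mg1_admits_strong_set_of_states \<and>
         (\<forall>m. mg1_state m \<and> m (At V) = 1 \<longrightarrow> m (Co U) = 1) \<and>
         \<not> mg1_le (At V) (Co U)"
proof -
  have "\<not> mg1_admits_strong_set_of_states"
    unfolding mg1_admits_strong_set_of_states_def mg1_strong_set_of_states_def
    using V_not_le_co_U state_at_V_full_at_co_U by blast
  then show ?thesis using state_at_V_full_at_co_U V_not_le_co_U by blast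
qed

end
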